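(* Let $w$ be a word of length $k$ over an alphabet with $q \ge 2$ letters. Then $H_w(n) \ge (q-1)\, h_w(n-k-1)$ for all $n > k+1$.
   Context: Let $\Omega$ be a finite alphabet with $q\ge2$ letters; $w = w_k\dots w_1$ a word of length $k$. For an integer $n$, $h_w(n)$ is the number of strings of length $n$ over $\Omega$ whose last $k$ characters form $w$ and which contain $w$ as a block of $k$ consecutive characters nowhere else ($h_w(n) = 0$ for $n < k$, $h_w(k)=1$). $H_w(n) = q\,h_w(n-1) - h_w(n)$; for $n > k$ this equals the number of strings of length $n$ that begin with $w$, end with $w$, and contain $w$ as a block of $k$ consecutive characters nowhere else (and $H_w(k) = -1$, $H_w(n)=0$ for $n<k$). *)

theory Defs
  imports Main
begin

definition occurs_at :: "'a list \<Rightarrow> 'a list \<Rightarrow> nat \<Rightarrow> bool" where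
  "occurs_at w s i \<longleftrightarrow> i + length w \<le> length s \<and> take (length w) (drop i s) = w"

definition h_w :: "'a set \<Rightarrow> 'a list \<Rightarrow> nat \<Rightarrow> nat" where
  "h_w \<Omega> w n = card {s. s \<in> lists \<Omega> \<and> length s = n \<and> length w \<le> n \<and>
      (\<forall>i. occurs_at w s i \<longleftrightarrow> i = n - length w)}"

definition H_w :: "'a set \<Rightarrow> 'a list \<Rightarrow> nat \<Rightarrow> int" where
  "H_w \<Omega> w n = int (card \<Omega>) * int (h_w \<Omega> w (n - 1)) - int (h_w \<Omega> w n)"

end

theory Submission
  imports Defs
begin

text \<open>Splitting the strings counted by \<open>q h\<^sub>w(n-1)\<close> according to whether they begin with
  \<open>w\<close> shows that, for \<open>n > k\<close>, \<open>H\<^sub>w(n)\<close> counts the strings of length \<open>n\<close> in which \<open>w\<close>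
  occurs exactly at the beginning and at the end. For each \<open>u\<close> counted by \<open>h\<^sub>w(n-k-1)\<close>, the
  string \<open>w c u\<close> is such a string unless \<open>w\<close> also occurs at one of the positions \<open>1..k\<close>.
  An occurrence at position \<open>i\<close> makes \<open>i\<close> a period of \<open>w\<close> and fixes \<open>c = w(k-i)\<close>; two such
  overlaps with different letters would contradict each other, so at most one letter \<open>c\<close> is lost.\<close>

lemma occurs_at_nth: "occurs_at w s i \<Longrightarrow> x < length w \<Longrightarrow> s ! (i + x) = w ! x"
  unfolding occurs_at_def by (metis add_leD1 nth_drop nth_take)

lemma occurs_at_append_iff: "occurs_at w (xs @ ys) (length xs + j) \<longleftrightarrow> occurs_at w ys j"
  by (simp add: occurs_at_def)

lemma occurs_at_Cons_Suc_iff: "occurs_at w (x # s) (Suc j) \<longleftrightarrow> occurs_at w s j"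
  using occurs_at_append_iff[of w "[x]" s j] by simp

lemma occurs_at_overlap:
  assumes occ: "occurs_at w (w @ [c] @ p) i" and "1 \<le> i" "i \<le> length w"
  shows overlap_period: "\<And>x. x + i < length w \<Longrightarrow> w ! (x + i) = w ! x"
    and overlap_letter: "c = w ! (length w - i)"
    and overlap_tail: "\<And>y. y + 1 < i \<Longrightarrow> p ! y = w ! (length w - i + 1 + y)"
proof -
  have nth: "(w @ [c] @ p) ! (i + x) = w ! x" if "x < length w" for x
    using occurs_at_nth[OF occ that] .
  show "w ! (x + i) = w ! x" if "x + i < length w" for x
    using nth[of x] that by (simp add: nth_append add.commute)
  show "c = w ! (length w - i)"
    using nth[of "length w - i"] assms(2,3) by (simp add: nth_append)
  show "p ! y = w ! (length w - i + 1 + y)" if "y + 1 < i" for y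
    using nth[of "length w - i + 1 + y"] that assms(3) by (simp add: nth_append)
qed

lemma periodic_shift_eq_from_window:
  fixes F :: "nat \<Rightarrow> 'a"
  assumes "0 < i"
    and periodic: "\<And>a b. a mod i = b mod i \<Longrightarrow> F a = F b"
    and window: "\<And>y. r < y \<Longrightarrow> y < r + i \<Longrightarrow> F y = F (y + d)"
  shows "F r = F (r + d)"
proof -
  \<comment> \<open>\<open>x t \<equiv> r + t d (mod i)\<close> inside the window \<open>[r, r + i)\<close>; it is back at \<open>r\<close> for \<open>t = i\<close>,
    and before that each step is one window equation.\<close>
  define x where "x t = r + t * d mod i" for t
  have "F (r + d) = F (x t) \<or> F (r + d) = F r" if "1 \<le> t" for t
    using that
  proof (induction t rule: dec_induct)
    case base
    show ?case by (auto simp: x_def intro: periodic mod_add_right_eq[symmetric])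
  next
    case (step t)
    show ?case
    proof (cases "x t = r")
      case True
      then show ?thesis using step.IH by auto
    next
      case False
      then have "F (x t) = F (x t + d)"
        using window[of "x t"] \<open>0 < i\<close> by (simp add: x_def)
      also have "\<dots> = F (x (Suc t))"
        by (rule periodic) (metis x_def add.commute add.left_commute mod_add_right_eq mult_Suc)
      finally show ?thesis using step.IH by auto
    qed
  qed
  from this[of i] \<open>0 < i\<close> show ?thesis by (auto simp: x_def)
qed

lemma nth_eq_nth_mod_period:
  assumes "0 < i" and period: "\<And>x. x + i < length w \<Longrightarrow> w ! (x + i) = w ! x"
  shows "x < length w \<Longrightarrow> w ! x = w ! (x mod i)"
proof (induction x rule: less_induct)
  case (less x)
  show ?case
  proof (cases "x < i")
    case False
    then have "w ! x = w ! (x - i)" using period[of "x - i"] less.prems by simp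
    also have "\<dots> = w ! (x mod i)" using less False \<open>0 < i\<close> by (simp add: le_mod_geq)
    finally show ?thesis .
  qed simp
qed

lemma two_periods_letter_eq:
  assumes "1 \<le> i" "i < j" "j \<le> length w"
    and period: "\<And>x. x + i < length w \<Longrightarrow> w ! (x + i) = w ! x"
    and tails: "\<And>y. y + 1 < i \<Longrightarrow> w ! (length w - i + 1 + y) = w ! (length w - j + 1 + y)"
  shows "w ! (length w - i) = w ! (length w - j)"
proof -
  define F where "F x = w ! (x mod i)" for x
  define r where "r = length w - j"
  define d where "d = j - i"
  have F_nth: "F x = w ! x" if "x < length w" for x
    using nth_eq_nth_mod_period[OF _ period that] assms(1) by (simp add: F_def)
  have "F r = F (r + d)"
  proof (rule periodic_shift_eq_from_window)
    show "F a = F b" if "a mod i = b mod i" for a b using that by (simp add: F_def)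
    show "F y = F (y + d)" if "r < y" "y < r + i" for y
    proof -
      define z where "z = y - r - 1"
      have y: "y = r + 1 + z" and "z + 1 < i" using that by (auto simp: z_def)
      then have "w ! y = w ! (y + d)"
        using tails[of z] assms(2,3) by (simp add: r_def d_def)
      then show ?thesis using F_nth that assms(2,3) by (simp add: r_def d_def)
    qed
  qed (use assms(1) in simp)
  then show ?thesis using F_nth assms by (simp add: r_def d_def)
qed

lemma overlap_letter_unique:
  assumes occ: "occurs_at w (w @ [c] @ p) i" and occ': "occurs_at w (w @ [c'] @ p) j"
    and "1 \<le> i" "i \<le> length w" "1 \<le> j" "j \<le> length w"
  shows "c = c'"
proof -
  have less: "c = c'"
    if occ: "occurs_at w (w @ [c] @ p) i" and occ': "occurs_at w (w @ [c'] @ p) j"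
      and "1 \<le> i" "i < j" "j \<le> length w" for c c' i j
  proof -
    have "w ! (length w - i) = w ! (length w - j)"
    proof (rule two_periods_letter_eq)
      show "w ! (x + i) = w ! x" if "x + i < length w" for x
        using overlap_period[OF occ _ _ that] that \<open>1 \<le> i\<close> by simp
      show "w ! (length w - i + 1 + y) = w ! (length w - j + 1 + y)" if "y + 1 < i" for y
        using overlap_tail[OF occ _ _ that] overlap_tail[OF occ', of y] that
          \<open>1 \<le> i\<close> \<open>i < j\<close> \<open>j \<le> length w\<close> by simp
    qed (use that in auto)
    then show ?thesis
      using overlap_letter[OF occ] overlap_letter[OF occ'] that by simp
  qed
  consider "i < j" | "j < i" | "i = j" by arith
  then show ?thesis
  proof cases
    case 3
    then show ?thesis using overlap_letter[OF occ] overlap_letter[OF occ'] assms by simp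
  qed (use less[OF occ occ'] less[OF occ' occ] assms in auto)
qed

definition sole_suffix_words :: "'a set \<Rightarrow> 'a list \<Rightarrow> nat \<Rightarrow> 'a list set" where
  "sole_suffix_words \<Omega> w n = {s. s \<in> lists \<Omega> \<and> length s = n \<and> length w \<le> n \<and>
      (\<forall>i. occurs_at w s i \<longleftrightarrow> i = n - length w)}"

definition prefix_suffix_words :: "'a set \<Rightarrow> 'a list \<Rightarrow> nat \<Rightarrow> 'a list set" where
  "prefix_suffix_words \<Omega> w n = {s. s \<in> lists \<Omega> \<and> length s = n \<and>
      (\<forall>i. occurs_at w s i \<longleftrightarrow> i = 0 \<or> i = n - length w)}"

lemma h_w_eq_card_sole_suffix_words: "h_w \<Omega> w n = card (sole_suffix_words \<Omega> w n)"
  by (simp add: h_w_def sole_suffix_words_def)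

lemma finite_sole_suffix_words: "finite \<Omega> \<Longrightarrow> finite (sole_suffix_words \<Omega> w n)"
  by (rule finite_subset[OF _ finite_lists_length_eq[of \<Omega> n]]) (auto simp: sole_suffix_words_def)

lemma finite_prefix_suffix_words: "finite \<Omega> \<Longrightarrow> finite (prefix_suffix_words \<Omega> w n)"
  by (rule finite_subset[OF _ finite_lists_length_eq[of \<Omega> n]]) (auto simp: prefix_suffix_words_def)

lemma all_occurs_at_Cons_iff:
  "(\<forall>i. occurs_at w (x # s) i \<longleftrightarrow> P i) \<longleftrightarrow>
    (occurs_at w (x # s) 0 \<longleftrightarrow> P 0) \<and> (\<forall>i. occurs_at w s i \<longleftrightarrow> P (Suc i))"
  by (metis occurs_at_Cons_Suc_iff not0_implies_Suc)

lemma Cons_mem_sole_suffix_words_iff: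
  assumes "length w \<le> N"
  shows "x # s \<in> sole_suffix_words \<Omega> w (Suc N) \<longleftrightarrow>
    x \<in> \<Omega> \<and> s \<in> sole_suffix_words \<Omega> w N \<and> \<not> occurs_at w (x # s) 0"
  using assms by (auto simp: sole_suffix_words_def all_occurs_at_Cons_iff Suc_diff_le)

lemma Cons_mem_prefix_suffix_words_iff:
  assumes "length w \<le> N"
  shows "x # s \<in> prefix_suffix_words \<Omega> w (Suc N) \<longleftrightarrow>
    x \<in> \<Omega> \<and> s \<in> sole_suffix_words \<Omega> w N \<and> occurs_at w (x # s) 0"
  using assms
  by (auto simp: sole_suffix_words_def prefix_suffix_words_def all_occurs_at_Cons_iff Suc_diff_le)

lemma card_sole_suffix_words_Suc:
  assumes "finite \<Omega>" "length w \<le> N"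
  shows "card \<Omega> * card (sole_suffix_words \<Omega> w N) =
    card (sole_suffix_words \<Omega> w (Suc N)) + card (prefix_suffix_words \<Omega> w (Suc N))"
proof -
  let ?S = "sole_suffix_words \<Omega> w" and ?P = "prefix_suffix_words \<Omega> w"
  have image: "(\<lambda>(x, s). x # s) ` (\<Omega> \<times> ?S N) = ?S (Suc N) \<union> ?P (Suc N)"
  proof (intro equalityI subsetI)
    fix t assume t: "t \<in> (\<lambda>(x, s). x # s) ` (\<Omega> \<times> ?S N)"
    then obtain x s where "t = x # s" "x \<in> \<Omega>" "s \<in> ?S N" by auto
    then show "t \<in> ?S (Suc N) \<union> ?P (Suc N)"
      using Cons_mem_sole_suffix_words_iff[OF assms(2), of x s \<Omega>]
        Cons_mem_prefix_suffix_words_iff[OF assms(2), of x s \<Omega>] by blast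
  next
    fix t assume t: "t \<in> ?S (Suc N) \<union> ?P (Suc N)"
    then obtain x s where ts: "t = x # s"
      by (cases t) (auto simp: sole_suffix_words_def prefix_suffix_words_def)
    then have "x \<in> \<Omega>" "s \<in> ?S N"
      using t Cons_mem_sole_suffix_words_iff[OF assms(2), of x s \<Omega>]
        Cons_mem_prefix_suffix_words_iff[OF assms(2), of x s \<Omega>] by blast+
    then show "t \<in> (\<lambda>(x, s). x # s) ` (\<Omega> \<times> ?S N)" using ts by blast
  qed
  have disjoint: "?S (Suc N) \<inter> ?P (Suc N) = {}"
  proof -
    have "occurs_at w t 0" if "t \<in> ?P (Suc N)" for t
      using that by (simp add: prefix_suffix_words_def)
    moreover have "\<not> occurs_at w t 0" if "t \<in> ?S (Suc N)" for t
      using that assms(2) by (simp add: sole_suffix_words_def)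
    ultimately show ?thesis by blast
  qed
  have "card \<Omega> * card (?S N) = card ((\<lambda>(x, s). x # s) ` (\<Omega> \<times> ?S N))"
    by (simp add: card_cartesian_product card_image inj_on_def)
  also have "\<dots> = card (?S (Suc N)) + card (?P (Suc N))"
    unfolding image using assms(1) disjoint
    by (intro card_Un_disjoint finite_sole_suffix_words finite_prefix_suffix_words)
  finally show ?thesis .
qed

lemma H_w_eq_card_prefix_suffix_words:
  assumes "finite \<Omega>" "length w < n"
  shows "H_w \<Omega> w n = int (card (prefix_suffix_words \<Omega> w n))"
proof -
  define N where "N = n - 1"
  have n: "n = Suc N" and "length w \<le> N"
    using assms(2) by (simp_all add: N_def)
  have "H_w \<Omega> w n = int (card \<Omega> * card (sole_suffix_words \<Omega> w N))
      - int (card (sole_suffix_words \<Omega> w (Suc N)))"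
    by (simp add: H_w_def h_w_eq_card_sole_suffix_words n)
  also have "\<dots> = int (card (prefix_suffix_words \<Omega> w n))"
    unfolding card_sole_suffix_words_Suc[OF assms(1) \<open>length w \<le> N\<close>] n by simp
  finally show ?thesis .
qed

definition overlap_free_letters :: "'a set \<Rightarrow> 'a list \<Rightarrow> 'a list \<Rightarrow> 'a set" where
  "overlap_free_letters \<Omega> w u =
    {c \<in> \<Omega>. \<forall>i. 1 \<le> i \<and> i \<le> length w \<longrightarrow> \<not> occurs_at w (w @ [c] @ u) i}"

lemma card_overlap_free_letters:
  assumes "finite \<Omega>"
  shows "card \<Omega> - 1 \<le> card (overlap_free_letters \<Omega> w u)"
proof (cases "overlap_free_letters \<Omega> w u = \<Omega>")
  case False
  then obtain b i where b: "b \<in> \<Omega>" "1 \<le> i" "i \<le> length w" "occurs_at w (w @ [b] @ u) i"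
    by (auto simp: overlap_free_letters_def)
  have "\<Omega> - {b} \<subseteq> overlap_free_letters \<Omega> w u"
    using overlap_letter_unique[OF _ b(4)] b(2,3) by (auto simp: overlap_free_letters_def)
  then have "card (\<Omega> - {b}) \<le> card (overlap_free_letters \<Omega> w u)"
    using assms by (intro card_mono) (auto simp: overlap_free_letters_def)
  then show ?thesis using b(1) assms by simp
qed simp

lemma append_mem_prefix_suffix_words:
  assumes "set w \<subseteq> \<Omega>" and u: "u \<in> sole_suffix_words \<Omega> w m"
    and c: "c \<in> overlap_free_letters \<Omega> w u"
  shows "w @ [c] @ u \<in> prefix_suffix_words \<Omega> w (length w + 1 + m)"
proof -
  have "length w \<le> m" and u_occ: "\<And>i. occurs_at w u i \<longleftrightarrow> i = m - length w"
    and "u \<in> lists \<Omega>" and "length u = m" using u by (auto simp: sole_suffix_words_def)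
  have "occurs_at w (w @ [c] @ u) i \<longleftrightarrow> i = 0 \<or> i = m + 1" for i
  proof -
    consider "i = 0" | "1 \<le> i" "i \<le> length w" | "length w < i"
      by linarith
    then show ?thesis
    proof cases
      case 2
      then show ?thesis using c \<open>length w \<le> m\<close> by (auto simp: overlap_free_letters_def)
    next
      case 3
      have "occurs_at w (w @ [c] @ u) i \<longleftrightarrow> occurs_at w u (i - length w - 1)"
        using occurs_at_append_iff[of w "w @ [c]" u "i - length w - 1"] 3 by simp
      also have "\<dots> \<longleftrightarrow> i - length w - 1 = m - length w" by (rule u_occ)
      also have "\<dots> \<longleftrightarrow> i = m + 1" using 3 \<open>length w \<le> m\<close> by arith
      finally show ?thesis using 3 by simp
    qed (simp add: occurs_at_def)
  qed
  moreover have "w @ [c] @ u \<in> lists \<Omega>"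
    using assms(1) c \<open>u \<in> lists \<Omega>\<close> by (auto simp: overlap_free_letters_def)
  ultimately show ?thesis
    using \<open>length u = m\<close> unfolding prefix_suffix_words_def by simp
qed

lemma card_prefix_suffix_words_ge:
  assumes "finite \<Omega>" "set w \<subseteq> \<Omega>"
  shows "(card \<Omega> - 1) * card (sole_suffix_words \<Omega> w m)
    \<le> card (prefix_suffix_words \<Omega> w (length w + 1 + m))"
proof -
  let ?S = "sole_suffix_words \<Omega> w m" and ?G = "overlap_free_letters \<Omega> w"
  have "(card \<Omega> - 1) * card ?S \<le> (\<Sum>u\<in>?S. card (?G u))"
    using sum_mono[of ?S "\<lambda>_. card \<Omega> - 1" "\<lambda>u. card (?G u)"]
      card_overlap_free_letters[OF assms(1)]
    by (simp add: mult.commute)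
  also have "\<dots> = card (Sigma ?S ?G)"
    using assms(1) by (simp add: finite_sole_suffix_words overlap_free_letters_def)
  also have "\<dots> = card ((\<lambda>(u, c). w @ [c] @ u) ` Sigma ?S ?G)"
    by (rule card_image[symmetric]) (auto simp: inj_on_def)
  also have "\<dots> \<le> card (prefix_suffix_words \<Omega> w (length w + 1 + m))"
    using append_mem_prefix_suffix_words[OF assms(2)]
    by (intro card_mono finite_prefix_suffix_words assms(1)) auto
  finally show ?thesis .
qed

theorem corollary4p2:
  fixes \<Omega> :: "'a set" and w :: "'a list" and k n :: nat
  assumes "finite \<Omega>" and "card \<Omega> \<ge> 2"
    and "set w \<subseteq> \<Omega>" and "length w = k"
    and "n > k + 1"
  shows "H_w \<Omega> w n \<ge> (int (card \<Omega>) - 1) * int (h_w \<Omega> w (n - k - 1))"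
proof -
  have n: "n = length w + 1 + (n - k - 1)" using assms(4,5) by simp
  have "(int (card \<Omega>) - 1) * int (h_w \<Omega> w (n - k - 1))
      = int ((card \<Omega> - 1) * card (sole_suffix_words \<Omega> w (n - k - 1)))"
    using assms(2) by (simp add: h_w_eq_card_sole_suffix_words of_nat_diff)
  also have "\<dots> \<le> int (card (prefix_suffix_words \<Omega> w n))"
    unfolding of_nat_le_iff
    using card_prefix_suffix_words_ge[OF assms(1,3), of "n - k - 1"] n by simp
  also have "\<dots> = H_w \<Omega> w n"
    using H_w_eq_card_prefix_suffix_words[OF assms(1)] assms(4,5) by simp
  finally show ?thesis .
qed

end
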